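(* For every $\mathcal{V}$-poset $P$, \[\mathcal{P}(P;x,y)=L(P;x,y):=\sum_{A\in\mathcal{A}(P)}x^{b(A)}y^{s(A)}.\]
   Context: All posets are finite. A $\mathcal{V}$-poset is a poset generated from the empty poset by repeatedly applying: disjoint union of $\mathcal{V}$-posets, adding a new greatest element, adding a new least element. The polynomial $\mathcal{P}$ is defined on $\mathcal{V}$-posets by: $\mathcal{P}(\emptyset;x,y)=1$; $\mathcal{P}(\bullet;x,y)=x$ for the one-element poset; $\mathcal{P}(\bigcup_iP_i;x,y)=\prod_i\mathcal{P}(P_i;x,y)$ for a disjoint union; and $\mathcal{P}(P\cup\{g\};x,y)=\mathcal{P}(P\cup\{\ell\};x,y)=\mathcal{P}(P;x,y)+y^{|P|}$ where $g$ (resp. $\ell$) is a new greatest (resp. least) element. An element $x$ is basic if: (B.1) there are no two incomparable elements $u,v$ with $x>u$ and $x>v$; (B.2) there are no two incomparable elements $u,v$ with $x<u$ and $x<v$; (B.3) there is no element $u$ with $u<x$ such that for all $w\neq u,x$ one has ($u\ge w\iff x\ge w$) and ($u\le w\iff x\le w$). An element is associated to a set $B$ of basic elements if it is comparable to every element of $B$ and incomparable to every other basic element. A non-basic element $u$ is upper if $u>b$ for some basic $b$, and lower if $u<b$ for some basic $b$. For $a\in P$: if $a$ is basic, $P_a=\emptyset$; otherwise let $B$ be the set of basic elements to which $a$ is associated; if $a$ is lower, $P_a=\{b\in P: a<b,\ \text{there is no } c \text{ with } c<b \text{ and } c \text{ incomparable to } a\}$; if $a$ is upper, $P_a=\{b\in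 P: a>b,\ \text{there is no } c \text{ with } c>b \text{ and } c \text{ incomparable to } a\}\setminus\{\ell\in P: \ell \text{ is a lower element associated to } B\}$. $\mathcal{A}(P)$ is the set of maximal antichains of $P$ (antichain: pairwise incomparable elements; maximal: not properly contained in another antichain). For $A\in\mathcal{A}(P)$, $b(A)$ is the number of basic elements in $A$ and $s(A)=\sum_{a\in A}|P_a|$. *)

theory Defs
  imports Main
begin

text \<open>A construction term of a V-poset: the empty poset, a disjoint union
of two V-posets, adding a new greatest element, adding a new least element.
(Finite disjoint unions are iterated binary ones.)\<close>

datatype vterm = VEmpty | VUnion vterm vterm | VTop vterm | VBot vterm

text \<open>Concrete realisation: elements are lists of naturals (tags).\<close>

fun velems :: "vterm \<Rightarrow> nat list set" where
  "velems VEmpty = {}"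
| "velems (VUnion s t) = Cons 0 ` velems s \<union> Cons 1 ` velems t"
| "velems (VTop t) = Cons 0 ` velems t \<union> {[1]}"
| "velems (VBot t) = Cons 0 ` velems t \<union> {[1]}"

fun vle :: "vterm \<Rightarrow> nat list \<Rightarrow> nat list \<Rightarrow> bool" where
  "vle VEmpty a b = False"
| "vle (VUnion s t) a b =
     ((\<exists>a' b'. a = 0 # a' \<and> b = 0 # b' \<and> vle s a' b') \<or>
      (\<exists>a' b'. a = 1 # a' \<and> b = 1 # b' \<and> vle t a' b'))"
| "vle (VTop t) a b =
     ((a \<in> velems (VTop t) \<and> b = [1]) \<or>
      (\<exists>a' b'. a = 0 # a' \<and> b = 0 # b' \<and> vle t a' b'))"
| "vle (VBot t) a b =
     ((a = [1] \<and> b \<in> velems (VBot t)) \<or>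
      (\<exists>a' b'. a = 0 # a' \<and> b = 0 # b' \<and> vle t a' b'))"

text \<open>The polynomial \<open>\<P>\<close>, evaluated in an arbitrary commutative ring.
Adding a greatest/least element to the empty poset yields the one-element
poset, whose value is \<open>x\<close>.\<close>

fun vpoly :: "vterm \<Rightarrow> 'a::comm_ring_1 \<Rightarrow> 'a \<Rightarrow> 'a" where
  "vpoly VEmpty x y = 1"
| "vpoly (VUnion s t) x y = vpoly s x y * vpoly t x y"
| "vpoly (VTop t) x y =
     (if velems t = {} then x else vpoly t x y + y ^ card (velems t))"
| "vpoly (VBot t) x y =
     (if velems t = {} then x else vpoly t x y + y ^ card (velems t))"

definition plt :: "('b \<Rightarrow> 'b \<Rightarrow> bool) \<Rightarrow> 'b \<Rightarrow> 'b \<Rightarrow> bool" where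
  "plt le u v \<longleftrightarrow> le u v \<and> u \<noteq> v"

definition pcomp :: "('b \<Rightarrow> 'b \<Rightarrow> bool) \<Rightarrow> 'b \<Rightarrow> 'b \<Rightarrow> bool" where
  "pcomp le u v \<longleftrightarrow> le u v \<or> le v u"

definition basic :: "'b set \<Rightarrow> ('b \<Rightarrow> 'b \<Rightarrow> bool) \<Rightarrow> 'b \<Rightarrow> bool" where
  "basic S le x \<longleftrightarrow> x \<in> S \<and>
     \<not> (\<exists>u\<in>S. \<exists>v\<in>S. \<not> pcomp le u v \<and> plt le u x \<and> plt le v x) \<and>
     \<not> (\<exists>u\<in>S. \<exists>v\<in>S. \<not> pcomp le u v \<and> plt le x u \<and> plt le x v) \<and>
     \<not> (\<exists>u\<in>S. plt le u x \<and>
          (\<forall>w\<in>S. w \<noteq> u \<and> w \<noteq> x \<longrightarrow>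
             ((le w u \<longleftrightarrow> le w x) \<and> (le u w \<longleftrightarrow> le x w))))"

definition assoc_basic :: "'b set \<Rightarrow> ('b \<Rightarrow> 'b \<Rightarrow> bool) \<Rightarrow> 'b \<Rightarrow> 'b set" where
  "assoc_basic S le a = {b \<in> S. basic S le b \<and> pcomp le a b}"

definition upper :: "'b set \<Rightarrow> ('b \<Rightarrow> 'b \<Rightarrow> bool) \<Rightarrow> 'b \<Rightarrow> bool" where
  "upper S le u \<longleftrightarrow> u \<in> S \<and> \<not> basic S le u \<and> (\<exists>b\<in>S. basic S le b \<and> plt le b u)"

definition lower :: "'b set \<Rightarrow> ('b \<Rightarrow> 'b \<Rightarrow> bool) \<Rightarrow> 'b \<Rightarrow> bool" where
  "lower S le u \<longleftrightarrow> u \<in> S \<and> \<not> basic S le u \<and> (\<exists>b\<in>S. basic S le b \<and> plt le u b)"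

definition Pset :: "'b set \<Rightarrow> ('b \<Rightarrow> 'b \<Rightarrow> bool) \<Rightarrow> 'b \<Rightarrow> 'b set" where
  "Pset S le a =
    (if basic S le a then {}
     else if lower S le a then
       {b \<in> S. plt le a b \<and> \<not> (\<exists>c\<in>S. plt le c b \<and> \<not> pcomp le c a)}
     else if upper S le a then
       {b \<in> S. plt le b a \<and> \<not> (\<exists>c\<in>S. plt le b c \<and> \<not> pcomp le c a)}
       - {l \<in> S. lower S le l \<and> assoc_basic S le l = assoc_basic S le a}
     else {})"

definition max_antichain :: "'b set \<Rightarrow> ('b \<Rightarrow> 'b \<Rightarrow> bool) \<Rightarrow> 'b set \<Rightarrow> bool" where
  "max_antichain S le A \<longleftrightarrow> A \<subseteq> S \<and>
     (\<forall>u\<in>A. \<forall>v\<in>A. u \<noteq> v \<longrightarrow> \<not> pcomp le u v) \<and>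
     (\<forall>z\<in>S - A. \<exists>a\<in>A. pcomp le z a)"

definition Lpoly :: "'b set \<Rightarrow> ('b \<Rightarrow> 'b \<Rightarrow> bool) \<Rightarrow> 'a::comm_ring_1 \<Rightarrow> 'a \<Rightarrow> 'a" where
  "Lpoly S le x y =
    (\<Sum>A\<in>{A. max_antichain S le A}.
       x ^ card {a \<in> A. basic S le a} * y ^ (\<Sum>a\<in>A. card (Pset S le a)))"

end

theory Submission
  imports Defs
begin

text \<open>
  Every V-poset is built from the empty poset by disjoint unions and by adjoining a new greatest
  or least element, so it suffices to show that L obeys the recursion that defines P.
  The maximal antichains of a disjoint union are the unions of maximal antichains of the summands,
  and b and s are additive, so L is multiplicative. Adjoining an extreme element g to a nonempty
  poset with n elements adds the antichain {g} and keeps all others. For a chain,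
  L = x + y + ... + y^(n-1) directly. Otherwise no old element changes its basic status.
  A new least element leaves every P_a unchanged, and P_g consists of all n old elements.
  A new greatest element enters P_a exactly for the u lower elements a comparable to everything;
  these lie only in the singleton antichains {a}, and P_g consists of the other n - u elements.
  As their P-sets have sizes n - u, ..., n - 1, the old antichains gain
  (y - 1) (y^(n-u) + ... + y^(n-1)) = y^n - y^(n-u), and {g} contributes y^(n-u).
  This size condition, and the fact that a lower element associated to all basic elements is
  comparable to everything, hold in all V-posets and are proved along the way.
\<close>

definition universal :: "'b set \<Rightarrow> ('b \<Rightarrow> 'b \<Rightarrow> bool) \<Rightarrow> 'b \<Rightarrow> bool" where
  "universal S le a \<longleftrightarrow> (\<forall>c\<in>S. pcomp le a c)"

definition basics :: "'b set \<Rightarrow> ('b \<Rightarrow> 'b \<Rightarrow> bool) \<Rightarrow> 'b set" where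
  "basics S le = {b\<in>S. basic S le b}"

definition universal_lowers :: "'b set \<Rightarrow> ('b \<Rightarrow> 'b \<Rightarrow> bool) \<Rightarrow> 'b set" where
  "universal_lowers S le = {a\<in>S. lower S le a \<and> universal S le a}"

definition max_antichains :: "'b set \<Rightarrow> ('b \<Rightarrow> 'b \<Rightarrow> bool) \<Rightarrow> 'b set set" where
  "max_antichains S le = {A. max_antichain S le A}"

definition bnum :: "'b set \<Rightarrow> ('b \<Rightarrow> 'b \<Rightarrow> bool) \<Rightarrow> 'b set \<Rightarrow> nat" where
  "bnum S le A = card {a\<in>A. basic S le a}"

definition snum :: "'b set \<Rightarrow> ('b \<Rightarrow> 'b \<Rightarrow> bool) \<Rightarrow> 'b set \<Rightarrow> nat" where
  "snum S le A = (\<Sum>a\<in>A. card (Pset S le a))"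

lemma pcomp_commute: "pcomp le a b \<longleftrightarrow> pcomp le b a"
  unfolding pcomp_def by blast

lemma lower_not_basic: "lower S le a \<Longrightarrow> \<not> basic S le a"
  unfolding lower_def by blast

lemma Lpoly_eq_sum_max_antichains:
  "Lpoly S le x y = (\<Sum>A\<in>max_antichains S le. x ^ bnum S le A * y ^ snum S le A)"
  unfolding Lpoly_def max_antichains_def bnum_def snum_def ..

lemma max_antichains_subset_Pow: "max_antichains S le \<subseteq> Pow S"
  unfolding max_antichains_def max_antichain_def by auto

lemma max_antichains_subset: "A \<in> max_antichains S le \<Longrightarrow> A \<subseteq> S"
  unfolding max_antichains_def max_antichain_def by blast

lemma finite_max_antichains: "finite S \<Longrightarrow> finite (max_antichains S le)"
  using max_antichains_subset_Pow by (rule finite_subset) simp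

lemma universal_lowers_subset: "universal_lowers S le \<subseteq> S"
  unfolding universal_lowers_def by blast

lemma bnum_universal_lower: "a \<in> universal_lowers S le \<Longrightarrow> bnum S le {a} = 0"
  using lower_not_basic[of S le a] unfolding bnum_def universal_lowers_def by auto

lemma max_antichains_empty: "max_antichains {} le = {{}}"
  unfolding max_antichains_def max_antichain_def by auto

lemma universal_singleton_max_antichain:
  "a \<in> S \<Longrightarrow> universal S le a \<Longrightarrow> {a} \<in> max_antichains S le"
  unfolding max_antichains_def max_antichain_def universal_def pcomp_def by auto

lemma max_antichain_universal_singleton:
  assumes "A \<in> max_antichains S le" "a \<in> A" "universal S le a"
  shows "A = {a}"
proof -
  have sub: "A \<subseteq> S" and ac: "\<And>u v. u \<in> A \<Longrightarrow> v \<in> A \<Longrightarrow> u \<noteq> v \<Longrightarrow> \<not> pcomp le u v"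
    using assms(1) unfolding max_antichains_def max_antichain_def by auto
  have "b = a" if "b \<in> A" for b
    using ac[OF assms(2) that] assms(3) sub that unfolding universal_def by blast
  then show ?thesis using assms(2) by blast
qed

lemma not_basic_below:
  "\<lbrakk>u \<in> S; v \<in> S; \<not> pcomp le u v; plt le u x; plt le v x\<rbrakk> \<Longrightarrow> \<not> basic S le x"
  unfolding basic_def by blast

lemma not_basic_above:
  "\<lbrakk>u \<in> S; v \<in> S; \<not> pcomp le u v; plt le x u; plt le x v\<rbrakk> \<Longrightarrow> \<not> basic S le x"
  unfolding basic_def by blast

lemma not_basic_twin:
  assumes "u \<in> S" "plt le u x"
    "\<And>w. w \<in> S \<Longrightarrow> w \<noteq> u \<Longrightarrow> w \<noteq> x \<Longrightarrow> (le w u \<longleftrightarrow> le w x) \<and> (le u w \<longleftrightarrow> le x w)"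
  shows "\<not> basic S le x"
  using assms unfolding basic_def by blast

lemma assoc_basic_universal: "universal S le a \<Longrightarrow> assoc_basic S le a = basics S le"
  unfolding universal_def assoc_basic_def basics_def by auto

lemma Pset_subset: "Pset S le a \<subseteq> S"
  unfolding Pset_def by auto

definition Pset_up :: "'b set \<Rightarrow> ('b \<Rightarrow> 'b \<Rightarrow> bool) \<Rightarrow> 'b \<Rightarrow> 'b set" where
  "Pset_up S le a = {b\<in>S. plt le a b \<and> \<not> (\<exists>c\<in>S. plt le c b \<and> \<not> pcomp le c a)}"

definition Pset_down :: "'b set \<Rightarrow> ('b \<Rightarrow> 'b \<Rightarrow> bool) \<Rightarrow> 'b \<Rightarrow> 'b set" where
  "Pset_down S le a = {b\<in>S. plt le b a \<and> \<not> (\<exists>c\<in>S. plt le b c \<and> \<not> pcomp le c a)}"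

definition same_assoc_lowers :: "'b set \<Rightarrow> ('b \<Rightarrow> 'b \<Rightarrow> bool) \<Rightarrow> 'b \<Rightarrow> 'b set" where
  "same_assoc_lowers S le a = {l\<in>S. lower S le l \<and> assoc_basic S le l = assoc_basic S le a}"

lemma Pset_eq:
  "Pset S le a = (if basic S le a then {}
     else if lower S le a then Pset_up S le a
     else if upper S le a then Pset_down S le a - same_assoc_lowers S le a else {})"
  unfolding Pset_def Pset_up_def Pset_down_def same_assoc_lowers_def ..

lemma Pset_image:
  assumes "basic S' le' a' = basic S le a" "lower S' le' a' = lower S le a"
    "upper S' le' a' = upper S le a" "Pset_up S' le' a' = f ` Pset_up S le a"
    "Pset_down S' le' a' - same_assoc_lowers S' le' a' = f ` (Pset_down S le a - same_assoc_lowers S le a)"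
  shows "Pset S' le' a' = f ` Pset S le a"
  using assms unfolding Pset_eq by simp

lemma sum_powers_telescope:
  fixes y :: "'a::comm_ring_1"
  assumes "m \<le> n"
  shows "(y - 1) * (\<Sum>k = m..<n. y ^ k) = y ^ n - y ^ m"
proof -
  have "(y - 1) * (\<Sum>k = m..<n. y ^ k) = (\<Sum>k = m..<n. y ^ Suc k - y ^ k)"
    by (simp add: sum_distrib_left left_diff_distrib)
  also have "\<dots> = y ^ n - y ^ m"
    by (rule sum_Suc_diff'[OF assms])
  finally show ?thesis .
qed

lemma bnum_image:
  assumes "inj_on f A" "\<And>a. a \<in> A \<Longrightarrow> basic S' le' (f a) = basic S le a"
  shows "bnum S' le' (f ` A) = bnum S le A"
proof -
  have "{b\<in>f ` A. basic S' le' b} = f ` {a\<in>A. basic S le a}" using assms(2) by auto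
  moreover have "inj_on f {a\<in>A. basic S le a}" using assms(1) by (rule inj_on_subset) blast
  ultimately show ?thesis unfolding bnum_def by (simp add: card_image)
qed

lemma snum_image: "inj_on f A \<Longrightarrow> snum S' le' (f ` A) = (\<Sum>a\<in>A. card (Pset S' le' (f a)))"
  unfolding snum_def by (simp add: sum.reindex)

lemma bij_betw_image_transfer:
  assumes "inj_on f A" "bij_betw p A B" "bij_betw h B C" "\<And>a. a \<in> A \<Longrightarrow> q (f a) = h (p a)"
  shows "bij_betw q (f ` A) C"
proof -
  have "bij_betw (h \<circ> p) A C" using assms(2,3) by (rule bij_betw_trans)
  moreover have "bij_betw (q \<circ> f) A C \<longleftrightarrow> bij_betw (h \<circ> p) A C"
    using assms(4) by (intro bij_betw_cong) simp
  ultimately have "bij_betw (q \<circ> f) A C" by blast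
  then show ?thesis using bij_betw_comp_iff[OF inj_on_imp_bij_betw[OF assms(1)]] by blast
qed

lemma sum_max_antichains_split:
  assumes "finite S"
  shows "(\<Sum>A\<in>max_antichains S le. F A)
    = (\<Sum>A\<in>{A\<in>max_antichains S le. A \<inter> universal_lowers S le = {}}. F A)
      + (\<Sum>a\<in>universal_lowers S le. F {a})"
proof -
  let ?M1 = "{A\<in>max_antichains S le. A \<inter> universal_lowers S le = {}}"
  let ?M2 = "(\<lambda>a. {a}) ` universal_lowers S le"
  have "?M2 \<subseteq> max_antichains S le"
    by (rule image_subsetI, rule universal_singleton_max_antichain) (simp_all add: universal_lowers_def)
  moreover have "A \<in> ?M1 \<union> ?M2" if "A \<in> max_antichains S le" for A
  proof (cases "A \<inter> universal_lowers S le = {}")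
    case False
    then obtain a where "a \<in> A" "a \<in> universal_lowers S le" by blast
    then have "A = {a}"
      using max_antichain_universal_singleton[OF that] unfolding universal_lowers_def by blast
    then show ?thesis using \<open>a \<in> universal_lowers S le\<close> by blast
  qed (use that in blast)
  ultimately have "max_antichains S le = ?M1 \<union> ?M2" by blast
  then have "(\<Sum>A\<in>max_antichains S le. F A) = (\<Sum>A\<in>?M1 \<union> ?M2. F A)"
    by (rule sum.cong) (rule refl)
  also have "\<dots> = (\<Sum>A\<in>?M1. F A) + (\<Sum>A\<in>?M2. F A)"
  proof (rule sum.union_disjoint)
    have "finite (max_antichains S le)" using assms by (rule finite_max_antichains)
    then show "finite ?M1" "finite ?M2" using \<open>?M2 \<subseteq> max_antichains S le\<close>
      by (auto intro: finite_subset)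
  qed blast
  also have "(\<Sum>A\<in>?M2. F A) = (\<Sum>a\<in>universal_lowers S le. F {a})"
    by (rule sum.reindex[unfolded comp_def]) (simp add: inj_on_def)
  finally show ?thesis .
qed

lemma Lpoly_split_universal_lowers:
  assumes "finite S"
  shows "Lpoly S le x y
    = (\<Sum>A\<in>{A\<in>max_antichains S le. A \<inter> universal_lowers S le = {}}. x ^ bnum S le A * y ^ snum S le A)
      + (\<Sum>a\<in>universal_lowers S le. y ^ card (Pset S le a))"
  unfolding Lpoly_eq_sum_max_antichains sum_max_antichains_split[OF assms]
  by (simp add: bnum_universal_lower snum_def)

section \<open>Finite posets and chains\<close>

locale finite_poset =
  fixes S :: "'b set" and le :: "'b \<Rightarrow> 'b \<Rightarrow> bool"
  assumes finite_carrier: "finite S"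
    and reflexive: "a \<in> S \<Longrightarrow> le a a"
    and antisymmetric: "a \<in> S \<Longrightarrow> b \<in> S \<Longrightarrow> le a b \<Longrightarrow> le b a \<Longrightarrow> a = b"
    and transitive: "a \<in> S \<Longrightarrow> b \<in> S \<Longrightarrow> c \<in> S \<Longrightarrow> le a b \<Longrightarrow> le b c \<Longrightarrow> le a c"
begin

lemma finite_universal_lowers: "finite (universal_lowers S le)"
  using universal_lowers_subset finite_carrier by (rule finite_subset)

lemma card_universal_lowers_le: "card (universal_lowers S le) \<le> card S"
  using finite_carrier universal_lowers_subset by (rule card_mono)

lemma dual: "finite_poset S (\<lambda>a b. le b a)"
  by unfold_locales (use finite_carrier reflexive antisymmetric transitive in blast)+

lemma chain_has_greatest:
  assumes "F \<subseteq> S" "F \<noteq> {}" "Complete_Partial_Order.chain le F"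
  shows "\<exists>m\<in>F. \<forall>b\<in>F. le b m"
proof -
  have "finite F" using assms(1) finite_carrier by (rule finite_subset)
  from this assms(2,1,3) show ?thesis
  proof (induction F rule: finite_ne_induct)
    case (singleton a)
    then show ?case using reflexive by auto
  next
    case (insert a F)
    have "F \<subseteq> S" "Complete_Partial_Order.chain le F"
      using insert.prems chain_subset[of le "insert a F" F] by auto
    then obtain m where m: "m \<in> F" "\<And>b. b \<in> F \<Longrightarrow> le b m"
      using insert.IH by blast
    have aS: "a \<in> S" and mS: "m \<in> S" using insert.prems(1) m(1) by auto
    show ?case
    proof (cases "le m a")
      case True
      have "le b a" if "b \<in> F" for b
        using transitive[OF _ mS aS m(2)[OF that] True] that \<open>F \<subseteq> S\<close> by blast
      then show ?thesis using reflexive[OF aS] by blast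
    next
      case False
      then have "le a m" using chainD[OF insert.prems(2)] m(1) by blast
      then show ?thesis using m by blast
    qed
  qed
qed

lemma chain_has_least:
  assumes "F \<subseteq> S" "F \<noteq> {}" "Complete_Partial_Order.chain le F"
  shows "\<exists>m\<in>F. \<forall>b\<in>F. le m b"
  using finite_poset.chain_has_greatest[OF dual assms(1,2)] assms(3)
  unfolding chain_def by blast

end

(* Properties of all V-posets that the induction carries along. The spectrum condition says that
   the u universal lower elements have P-sets of sizes n - u, ..., n - 1, as for a chain at the bottom. *)
locale tame_poset = finite_poset +
  assumes basics_nonempty: "S \<noteq> {} \<Longrightarrow> basics S le \<noteq> {}"
    and lower_assoc_all_basics_universal:
      "l \<in> S \<Longrightarrow> lower S le l \<Longrightarrow> assoc_basic S le l = basics S le \<Longrightarrow> universal S le l"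
    and universal_lowers_spectrum: "bij_betw (\<lambda>a. card (Pset S le a)) (universal_lowers S le)
      {card S - card (universal_lowers S le)..<card S}"
begin

lemma sum_universal_lowers:
  "(\<Sum>a\<in>universal_lowers S le. y ^ card (Pset S le a))
     = (\<Sum>k = card S - card (universal_lowers S le)..<card S. y ^ k)"
  using sum.reindex_bij_betw[OF universal_lowers_spectrum, of "power y"] .

lemma universal_lowers_eq: "{l\<in>S. lower S le l \<and> assoc_basic S le l = basics S le} = universal_lowers S le"
proof -
  have "lower S le l \<and> assoc_basic S le l = basics S le \<longleftrightarrow> lower S le l \<and> universal S le l"
    if "l \<in> S" for l
    using lower_assoc_all_basics_universal[OF that] assoc_basic_universal[of S le l] by blast
  then show ?thesis unfolding universal_lowers_def by blast
qed

end

locale finite_chain = finite_poset +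
  assumes chain: "Complete_Partial_Order.chain le S"
begin

lemma linear: "a \<in> S \<Longrightarrow> b \<in> S \<Longrightarrow> le a b \<or> le b a"
  using chain by (rule chainD)

lemma basic_iff_least: "basic S le a \<longleftrightarrow> a \<in> S \<and> (\<forall>b\<in>S. le a b)"
proof
  assume basic: "basic S le a"
  then have aS: "a \<in> S" unfolding basic_def by blast
  show "a \<in> S \<and> (\<forall>b\<in>S. le a b)"
  proof (rule ccontr)
    assume "\<not> (a \<in> S \<and> (\<forall>b\<in>S. le a b))"
    then obtain b where "b \<in> S" "\<not> le a b" using aS by blast
    define F where "F = {c\<in>S. plt le c a}"
    have "b \<in> F" using \<open>b \<in> S\<close> \<open>\<not> le a b\<close> linear[OF aS] reflexive[OF aS]
      unfolding F_def plt_def by blast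
    moreover have "F \<subseteq> S" unfolding F_def by blast
    ultimately obtain p where pF: "p \<in> F" and p_greatest: "\<And>c. c \<in> F \<Longrightarrow> le c p"
      using chain_has_greatest[of F] chain_subset[OF chain] by blast
    have pS: "p \<in> S" and pa: "le p a" "p \<noteq> a" using pF unfolding F_def plt_def by auto
    have "(le w p \<longleftrightarrow> le w a) \<and> (le p w \<longleftrightarrow> le a w)"
      if wS: "w \<in> S" and w: "w \<noteq> p" "w \<noteq> a" for w
    proof (cases "le w a")
      case True
      then have "le w p" using p_greatest wS w unfolding F_def plt_def by blast
      then show ?thesis
        using True antisymmetric[OF wS pS] antisymmetric[OF wS aS] w by blast
    next
      case False
      then have "le a w" using linear[OF aS wS] by blast
      then show ?thesis using False pa transitive[OF wS pS aS] transitive[OF pS aS wS] by blast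
    qed
    then show False using not_basic_twin[of p S le a] basic pS pa unfolding plt_def by blast
  qed
next
  assume least: "a \<in> S \<and> (\<forall>b\<in>S. le a b)"
  then have "\<not> plt le u a" if "u \<in> S" for u
    using antisymmetric that unfolding plt_def by blast
  moreover have "\<not> plt le a u \<or> \<not> plt le a v \<or> pcomp le u v" if "u \<in> S" "v \<in> S" for u v
    using linear[OF that] unfolding pcomp_def by blast
  ultimately show "basic S le a"
    using least unfolding basic_def by blast
qed

lemma not_lower: "\<not> lower S le a"
  using basic_iff_least antisymmetric unfolding lower_def plt_def by blast

lemma Pset_chain: "a \<in> S \<Longrightarrow> Pset S le a = {b\<in>S. plt le b a}"
proof (cases "basic S le a")
  case True
  then show ?thesis
    using basic_iff_least antisymmetric unfolding Pset_def plt_def by auto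
next
  case False
  assume aS: "a \<in> S"
  then obtain b where "b \<in> S" "\<not> le a b" using False basic_iff_least by blast
  moreover obtain m where "m \<in> S" "\<forall>b\<in>S. le m b"
    using chain_has_least[of S] chain aS by blast
  ultimately have "upper S le a"
    using aS False basic_iff_least unfolding upper_def plt_def by blast
  then show ?thesis
    using False aS not_lower linear unfolding Pset_def pcomp_def by auto
qed

lemma card_Pset_chain_bij: "bij_betw (\<lambda>a. card (Pset S le a)) S {0..<card S}"
proof -
  let ?r = "\<lambda>a. card {b\<in>S. plt le b a}"
  have rank_mono: "?r a < ?r b" if aS: "a \<in> S" and bS: "b \<in> S" and ab: "plt le a b" for a b
  proof (rule psubset_card_mono)
    show "finite {c\<in>S. plt le c b}" using finite_carrier by simp
    have "plt le c b" if "c \<in> S" "plt le c a" for c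
      using that aS bS ab transitive[of c a b] antisymmetric[of a b] unfolding plt_def by blast
    moreover have "a \<in> {c\<in>S. plt le c b} - {c\<in>S. plt le c a}"
      using aS ab unfolding plt_def by blast
    ultimately show "{c\<in>S. plt le c a} \<subset> {c\<in>S. plt le c b}" by blast
  qed
  have inj: "inj_on ?r S"
  proof (rule inj_onI, rule ccontr)
    fix a b assume "a \<in> S" "b \<in> S" "?r a = ?r b" "a \<noteq> b"
    then show False
      using linear[of a b] rank_mono[of a b] rank_mono[of b a] unfolding plt_def by force
  qed
  have "?r a < card S" if "a \<in> S" for a
    using that finite_carrier by (intro psubset_card_mono) (auto simp: plt_def)
  then have "?r ` S = {0..<card S}"
    using card_image[OF inj] by (intro card_subset_eq) auto
  then have "bij_betw ?r S {0..<card S}" using inj unfolding bij_betw_def by blast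
  then show ?thesis by (rule bij_betw_cong[THEN iffD1, rotated]) (simp add: Pset_chain)
qed

lemma chain_universal: "a \<in> S \<Longrightarrow> universal S le a"
  using linear unfolding universal_def pcomp_def by blast

lemma max_antichains_chain:
  assumes "S \<noteq> {}"
  shows "max_antichains S le = (\<lambda>a. {a}) ` S"
proof (rule equalityI)
  show "(\<lambda>a. {a}) ` S \<subseteq> max_antichains S le"
    by (intro image_subsetI universal_singleton_max_antichain chain_universal)
next
  show "max_antichains S le \<subseteq> (\<lambda>a. {a}) ` S"
  proof (rule subsetI)
    fix A assume A: "A \<in> max_antichains S le"
    then have "A \<subseteq> S" "A \<noteq> {}"
      using assms unfolding max_antichains_def max_antichain_def by auto
    then obtain a where "a \<in> A" "a \<in> S" by blast
    then show "A \<in> (\<lambda>a. {a}) ` S"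
      using max_antichain_universal_singleton[OF A] chain_universal by blast
  qed
qed

lemma Lpoly_chain:
  assumes "S \<noteq> {}"
  shows "Lpoly S le x y = x + (\<Sum>k = 1..<card S. y ^ k)"
proof -
  obtain m where mS: "m \<in> S" and least: "\<forall>b\<in>S. le m b"
    using chain_has_least[of S] chain assms by blast
  let ?r = "\<lambda>a. card (Pset S le a)"
  have rank_least: "?r m = 0"
  proof -
    have "{b\<in>S. plt le b m} = {}"
      using least antisymmetric[OF _ mS] unfolding plt_def by blast
    then show ?thesis using Pset_chain[OF mS] by (metis card.empty)
  qed
  have weight: "x ^ bnum S le {a} * y ^ snum S le {a} = (if a = m then x else y ^ ?r a)"
    if "a \<in> S" for a
  proof -
    have "basic S le a \<longleftrightarrow> a = m"
      unfolding basic_iff_least using that mS least antisymmetric[OF that mS] by blast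
    moreover have "{b\<in>{a}. basic S le b} = (if basic S le a then {a} else {})" by auto
    ultimately show ?thesis unfolding bnum_def snum_def using rank_least by auto
  qed
  have "Lpoly S le x y = (\<Sum>a\<in>S. x ^ bnum S le {a} * y ^ snum S le {a})"
    unfolding Lpoly_eq_sum_max_antichains max_antichains_chain[OF assms]
    by (rule sum.reindex[unfolded comp_def]) (simp add: inj_on_def)
  also have "\<dots> = x + (\<Sum>a\<in>S - {m}. x ^ bnum S le {a} * y ^ snum S le {a})"
    by (subst sum.remove[OF finite_carrier mS]) (simp add: weight[OF mS])
  also have "(\<Sum>a\<in>S - {m}. x ^ bnum S le {a} * y ^ snum S le {a}) = (\<Sum>a\<in>S - {m}. y ^ ?r a)"
    using weight by (intro sum.cong) auto
  also have "(\<Sum>a\<in>S - {m}. y ^ ?r a) = (\<Sum>k = 1..<card S. y ^ k)"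
  proof (rule sum.reindex_bij_betw)
    have "bij_betw ?r (S - {m}) ({0..<card S} - {0})"
      using mS finite_carrier rank_least
      by (intro bij_betw_DiffI[OF card_Pset_chain_bij]) (auto simp: bij_betw_def card_gt_0_iff)
    moreover have "{0..<card S} - {0} = {1..<card S}" by auto
    ultimately show "bij_betw ?r (S - {m}) {1..<card S}" by simp
  qed
  finally show ?thesis .
qed

sublocale tame_poset
proof
  show "basics S le \<noteq> {}" if ne: "S \<noteq> {}"
  proof -
    obtain m where "m \<in> S" "\<forall>b\<in>S. le m b" using chain_has_least[OF _ ne chain] by blast
    then have "m \<in> basics S le" unfolding basics_def basic_iff_least by blast
    then show ?thesis by blast
  qed
  have "universal_lowers S le = {}" using not_lower unfolding universal_lowers_def by blast
  then show "bij_betw (\<lambda>a. card (Pset S le a)) (universal_lowers S le)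
      {card S - card (universal_lowers S le)..<card S}" by (simp add: bij_betw_def)
qed (simp add: not_lower)

end

section \<open>Adjoining a greatest or least element\<close>

(* S' is S with a new element g that is comparable to every element and lies strictly between
   none: a new greatest or least element. *)
locale point_extension = finite_poset S le
  for S :: "'b set" and le :: "'b \<Rightarrow> 'b \<Rightarrow> bool" +
  fixes S' :: "'c set" and le' :: "'c \<Rightarrow> 'c \<Rightarrow> bool" and f :: "'b \<Rightarrow> 'c" and g :: 'c
  assumes inj_f: "inj f"
    and f_ne_g: "f a \<noteq> g"
    and S'_eq: "S' = insert g (f ` S)"
    and le'_f_f [simp]: "le' (f a) (f b) \<longleftrightarrow> le a b"
    and pcomp_g: "pcomp le' g z \<longleftrightarrow> z \<in> S'"
    and g_not_between: "\<not> (le' (f a) g \<and> le' g (f b))"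
begin

lemma f_in_S' [simp]: "f a \<in> S' \<longleftrightarrow> a \<in> S"
  and g_in_S' [simp]: "g \<in> S'"
  and f_eq_iff [simp]: "f a = f b \<longleftrightarrow> a = b"
  and f_ne_g' [simp]: "f a \<noteq> g" "g \<noteq> f a"
  using inj_f f_ne_g unfolding S'_eq by (auto simp: inj_eq inj_image_mem_iff)

lemma ball_S': "(\<forall>z\<in>S'. P z) \<longleftrightarrow> P g \<and> (\<forall>a\<in>S. P (f a))"
  and bex_S': "(\<exists>z\<in>S'. P z) \<longleftrightarrow> P g \<or> (\<exists>a\<in>S. P (f a))"
  and Collect_S': "{z\<in>S'. P z} = (if P g then {g} else {}) \<union> f ` {a\<in>S. P (f a)}"
  unfolding S'_eq by auto

lemma S'_cases [consumes 1, case_names g f]: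
  "z \<in> S' \<Longrightarrow> (z = g \<Longrightarrow> P) \<Longrightarrow> (\<And>a. a \<in> S \<Longrightarrow> z = f a \<Longrightarrow> P) \<Longrightarrow> P"
  unfolding S'_eq by auto

lemma pcomp_simps [simp]:
  "pcomp le' (f a) (f b) \<longleftrightarrow> pcomp le a b"
  "pcomp le' g (f a) \<longleftrightarrow> a \<in> S"
  "pcomp le' (f a) g \<longleftrightarrow> a \<in> S"
  "pcomp le' g g"
  using pcomp_g[of "f a"] pcomp_g[of g] unfolding pcomp_def by auto

lemma plt_f_f [simp]: "plt le' (f a) (f b) \<longleftrightarrow> plt le a b"
  unfolding plt_def by simp

lemma le'_g_g: "le' g g"
  using pcomp_simps(4) unfolding pcomp_def by blast

lemma le'_f_g_cases: "a \<in> S \<Longrightarrow> le' (f a) g \<or> le' g (f a)"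
  using pcomp_simps(3)[of a] unfolding pcomp_def by blast

lemma finite_poset_S': "finite_poset S' le'"
proof
  show "finite S'" using finite_carrier unfolding S'_eq by simp
  show "le' z z" if "z \<in> S'" for z
    using that le'_g_g reflexive by (elim S'_cases) simp_all
  show "z = w" if "z \<in> S'" "w \<in> S'" "le' z w" "le' w z" for z w
    using that g_not_between antisymmetric by (elim S'_cases) simp_all
  show "le' z u" if "z \<in> S'" "w \<in> S'" "u \<in> S'" "le' z w" "le' w u" for z w u
    using that le'_g_g
    by (elim S'_cases) (simp_all, (meson le'_f_g_cases g_not_between transitive)+)
qed

lemma chain_S':
  assumes "Complete_Partial_Order.chain le S"
  shows "Complete_Partial_Order.chain le' S'"
proof (rule chainI)
  fix z w assume "z \<in> S'" "w \<in> S'"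
  then have "pcomp le' z w"
    using chainD[OF assms] by (elim S'_cases) (simp_all add: pcomp_def[of le])
  then show "le' z w \<or> le' w z" unfolding pcomp_def .
qed

lemma finite_chain_S': "Complete_Partial_Order.chain le S \<Longrightarrow> finite_chain S' le'"
  using finite_poset_S' chain_S' by (simp add: finite_chain_def finite_chain_axioms_def)

lemma card_S': "card S' = Suc (card S)"
  using finite_carrier unfolding S'_eq by (simp add: card_image inj_on_subset[OF inj_f] image_iff)

lemma universal_f: "a \<in> S \<Longrightarrow> universal S' le' (f a) \<longleftrightarrow> universal S le a"
  and universal_g: "universal S' le' g"
  unfolding universal_def by (auto simp: ball_S')

lemma max_antichain_image:
  assumes "S \<noteq> {}" "A \<subseteq> S"
  shows "max_antichain S' le' (f ` A) \<longleftrightarrow> max_antichain S le A"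
proof -
  have sub: "f ` A \<subseteq> S'" using assms(2) unfolding S'_eq by blast
  have anti: "(\<forall>u\<in>f ` A. \<forall>v\<in>f ` A. u \<noteq> v \<longrightarrow> \<not> pcomp le' u v)
      \<longleftrightarrow> (\<forall>u\<in>A. \<forall>v\<in>A. u \<noteq> v \<longrightarrow> \<not> pcomp le u v)"
    by simp
  have max: "(\<forall>z\<in>S' - f ` A. \<exists>b\<in>f ` A. pcomp le' z b) \<longleftrightarrow> (\<forall>z\<in>S - A. \<exists>b\<in>A. pcomp le z b)"
  proof
    assume H: "\<forall>z\<in>S - A. \<exists>b\<in>A. pcomp le z b"
    show "\<forall>z\<in>S' - f ` A. \<exists>b\<in>f ` A. pcomp le' z b"
    proof
      fix z assume "z \<in> S' - f ` A"
      then have "z \<in> S'" "z \<notin> f ` A" by auto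
      then show "\<exists>b\<in>f ` A. pcomp le' z b"
      proof (cases rule: S'_cases)
        case g
        obtain a where "a \<in> A" using H assms by blast
        then show ?thesis using g assms(2) by auto
      next
        case (f c)
        then have "c \<in> S - A" using \<open>z \<notin> f ` A\<close> by auto
        then obtain b where "b \<in> A" "pcomp le c b" using H by blast
        then show ?thesis using f by auto
      qed
    qed
  next
    assume H: "\<forall>z\<in>S' - f ` A. \<exists>b\<in>f ` A. pcomp le' z b"
    show "\<forall>z\<in>S - A. \<exists>b\<in>A. pcomp le z b"
    proof
      fix z assume "z \<in> S - A"
      then have "f z \<in> S' - f ` A" by (auto simp: inj_image_mem_iff[OF inj_f])
      then obtain b where "b \<in> A" "pcomp le' (f z) (f b)" using H by blast
      then show "\<exists>b\<in>A. pcomp le z b" by auto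
    qed
  qed
  show ?thesis
    unfolding max_antichain_def by (simp only: anti max sub assms(2) simp_thms)
qed

lemma max_antichains_S':
  assumes "S \<noteq> {}"
  shows "max_antichains S' le' = insert {g} ((`) f ` max_antichains S le)"
proof (rule equalityI)
  show "max_antichains S' le' \<subseteq> insert {g} ((`) f ` max_antichains S le)"
  proof (rule subsetI)
    fix A' assume A': "A' \<in> max_antichains S' le'"
    show "A' \<in> insert {g} ((`) f ` max_antichains S le)"
    proof (cases "g \<in> A'")
      case True
      then have "A' = {g}"
        using max_antichain_universal_singleton[OF A' _ universal_g] by blast
      then show ?thesis by blast
    next
      case False
      define A where "A = {a\<in>S. f a \<in> A'}"
      have "A' \<subseteq> S'" using A' max_antichains_subset_Pow by blast
      then have A'_eq: "A' = f ` A" using False unfolding A_def S'_eq by blast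
      have "A \<subseteq> S" unfolding A_def by blast
      then have "A \<in> max_antichains S le"
        using A' max_antichain_image[OF assms] unfolding A'_eq max_antichains_def by blast
      then show ?thesis unfolding A'_eq by blast
    qed
  qed
  have "f ` A \<in> max_antichains S' le'" if "A \<in> max_antichains S le" for A
    using that max_antichain_image[OF assms] max_antichains_subset_Pow[of S le]
    unfolding max_antichains_def by blast
  then show "insert {g} ((`) f ` max_antichains S le) \<subseteq> max_antichains S' le'"
    using universal_singleton_max_antichain[OF g_in_S' universal_g] by blast
qed

lemma Lpoly_S'_split:
  assumes "S \<noteq> {}"
  shows "Lpoly S' le' x y = x ^ bnum S' le' {g} * y ^ snum S' le' {g}
     + (\<Sum>A\<in>max_antichains S le. x ^ bnum S' le' (f ` A) * y ^ snum S' le' (f ` A))"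
proof -
  have "inj_on ((`) f) (max_antichains S le)"
    using inj_on_image_Pow[OF inj_on_subset[OF inj_f]] max_antichains_subset_Pow
    by (rule inj_on_subset) (rule subset_UNIV)
  moreover have "{g} \<notin> (`) f ` max_antichains S le"
    by (metis f_ne_g' imageE insertI1)
  ultimately show ?thesis
    unfolding Lpoly_eq_sum_max_antichains max_antichains_S'[OF assms]
    using finite_max_antichains[OF finite_carrier] by (simp add: sum.reindex)
qed

lemma Lpoly_S'_chain:
  assumes "Complete_Partial_Order.chain le S" "S \<noteq> {}"
  shows "Lpoly S' le' x y = Lpoly S le x y + y ^ card S"
proof -
  interpret S: finite_chain S le using assms(1) by unfold_locales
  interpret S': finite_chain S' le' using assms(1) by (rule finite_chain_S')
  have "card S \<noteq> 0" using assms(2) finite_carrier by simp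
  moreover have "S' \<noteq> {}" unfolding S'_eq by blast
  ultimately have "Lpoly S' le' x y = x + (\<Sum>k = 1..<Suc (card S). y ^ k)"
    using S'.Lpoly_chain unfolding card_S' by blast
  also have "\<dots> = Lpoly S le x y + y ^ card S"
    unfolding S.Lpoly_chain[OF assms(2)] using \<open>card S \<noteq> 0\<close> by (simp add: add.assoc)
  finally show ?thesis .
qed

lemma tame_poset_S'_chain:
  assumes "Complete_Partial_Order.chain le S"
  shows "tame_poset S' le'"
proof -
  interpret S': finite_chain S' le' using assms by (rule finite_chain_S')
  show ?thesis by (rule S'.tame_poset_axioms)
qed

end

locale proper_point_extension = point_extension + tame_poset S le +
  assumes not_chain: "\<not> Complete_Partial_Order.chain le S"
    and g_not_basic: "\<not> basic S' le' g"
    and basic_f [simp]: "basic S' le' (f a) \<longleftrightarrow> basic S le a"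
begin

lemma S_nonempty: "S \<noteq> {}"
proof
  assume "S = {}"
  then show False using not_chain by (simp add: chain_def)
qed

lemma basics_S': "basics S' le' = f ` basics S le"
  unfolding basics_def Collect_S' using g_not_basic by simp

lemma assoc_basic_f: "assoc_basic S' le' (f a) = f ` assoc_basic S le a"
  unfolding assoc_basic_def Collect_S' using g_not_basic by simp

lemma lower_f [simp]: "lower S' le' (f a) \<longleftrightarrow> lower S le a"
  and upper_f [simp]: "upper S' le' (f a) \<longleftrightarrow> upper S le a"
  unfolding lower_def upper_def using g_not_basic by (auto simp: bex_S')

lemma bnum_f: "bnum S' le' (f ` A) = bnum S le A"
  using inj_on_subset[OF inj_f subset_UNIV] by (rule bnum_image) simp

lemma bnum_g: "bnum S' le' {g} = 0"
  using g_not_basic unfolding bnum_def by simp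

lemma Lpoly_S'_split_proper:
  "Lpoly S' le' x y = y ^ card (Pset S' le' g)
     + (\<Sum>A\<in>max_antichains S le. x ^ bnum S le A * y ^ (\<Sum>a\<in>A. card (Pset S' le' (f a))))"
  unfolding Lpoly_S'_split[OF S_nonempty] bnum_f bnum_g
    snum_image[OF inj_on_subset[OF inj_f subset_UNIV]]
  by (simp add: snum_def)

lemma tame_poset_S'I:
  assumes "bij_betw (\<lambda>a. card (Pset S' le' a)) (universal_lowers S' le')
    {card S' - card (universal_lowers S' le')..<card S'}"
  shows "tame_poset S' le'"
proof (rule tame_poset.intro[OF finite_poset_S'], unfold_locales)
  show "basics S' le' \<noteq> {}"
    using basics_nonempty[OF S_nonempty] basics_S' by simp
next
  fix l assume "l \<in> S'" "lower S' le' l" "assoc_basic S' le' l = basics S' le'"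
  then show "universal S' le' l"
  proof (cases rule: S'_cases)
    case g
    then show ?thesis using universal_g by simp
  next
    case (f a)
    then have "lower S le a" "f ` assoc_basic S le a = f ` basics S le"
      using \<open>lower S' le' l\<close> \<open>assoc_basic S' le' l = basics S' le'\<close>
      by (simp_all add: assoc_basic_f basics_S')
    then have "universal S le a"
      using lower_assoc_all_basics_universal[OF \<open>a \<in> S\<close>] inj_image_eq_iff[OF inj_f] by blast
    then show ?thesis using f universal_f by simp
  qed
qed (rule assms)

end

locale top_extension = point_extension + tame_poset S le +
  assumes not_chain: "\<not> Complete_Partial_Order.chain le S"
    and g_above: "\<not> le' g (f a)"
begin

lemma le'_f_g [simp]: "le' (f a) g \<longleftrightarrow> a \<in> S"
  using pcomp_g[of "f a"] g_above unfolding pcomp_def by auto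

lemma plt_simps [simp]:
  "plt le' (f a) g \<longleftrightarrow> a \<in> S" "\<not> plt le' g (f a)" "\<not> plt le' g g"
  using g_above unfolding plt_def by auto

lemma g_not_basic: "\<not> basic S' le' g"
proof -
  obtain u v where "u \<in> S" "v \<in> S" "\<not> pcomp le u v"
    using not_chain unfolding chain_def pcomp_def by blast
  then show ?thesis by (intro not_basic_below[where u="f u" and v="f v"]) simp_all
qed

lemma basic_f: "basic S' le' (f a) \<longleftrightarrow> basic S le a"
  by (cases "a \<in> S") (simp_all add: basic_def ball_S' bex_S' g_above)

sublocale proper_point_extension
  by unfold_locales (fact not_chain g_not_basic basic_f)+


lemma lower_g: "\<not> lower S' le' g"
  unfolding lower_def by (simp add: bex_S')

lemma upper_g: "upper S' le' g"
proof -
  obtain b where "b \<in> basics S le" using basics_nonempty[OF S_nonempty] by blast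
  then show ?thesis using g_not_basic unfolding upper_def basics_def by (auto simp: bex_S')
qed

lemma Pset_up_f:
  "a \<in> S \<Longrightarrow> Pset_up S' le' (f a) = f ` Pset_up S le a \<union> (if universal S le a then {g} else {})"
  unfolding Pset_up_def Collect_S' universal_def by (auto simp: bex_S' pcomp_commute)

lemma Pset_down_f: "a \<in> S \<Longrightarrow> Pset_down S' le' (f a) = f ` Pset_down S le a"
  unfolding Pset_down_def Collect_S' by (simp add: bex_S')

lemma same_assoc_lowers_f: "same_assoc_lowers S' le' (f a) = f ` same_assoc_lowers S le a"
  unfolding same_assoc_lowers_def Collect_S' using lower_g
  by (simp add: assoc_basic_f inj_image_eq_iff[OF inj_f])

lemma Pset_f:
  assumes "a \<in> S"
  shows "Pset S' le' (f a) = f ` Pset S le a \<union> (if a \<in> universal_lowers S le then {g} else {})"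
  using lower_not_basic[of S le a] assms
  unfolding Pset_eq universal_lowers_def
  by (simp add: Pset_up_f Pset_down_f same_assoc_lowers_f image_set_diff[OF inj_f])

lemma card_Pset_f:
  assumes "a \<in> S"
  shows "card (Pset S' le' (f a)) = card (Pset S le a) + (if a \<in> universal_lowers S le then 1 else 0)"
proof -
  have "finite (f ` Pset S le a)" using finite_subset[OF Pset_subset finite_carrier] by simp
  moreover have "g \<notin> f ` Pset S le a" by auto
  ultimately show ?thesis
    unfolding Pset_f[OF assms] by (simp add: card_image inj_on_subset[OF inj_f])
qed

lemma Pset_g: "Pset S' le' g = f ` (S - universal_lowers S le)"
proof -
  have "Pset_down S' le' g = f ` S"
    unfolding Pset_down_def Collect_S' by (simp add: bex_S')
  moreover have "same_assoc_lowers S' le' g = f ` universal_lowers S le"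
    unfolding same_assoc_lowers_def Collect_S' assoc_basic_universal[OF universal_g]
      basics_S' universal_lowers_eq[symmetric]
    using lower_g by (simp add: assoc_basic_f inj_image_eq_iff[OF inj_f])
  ultimately show ?thesis
    unfolding Pset_eq using g_not_basic lower_g upper_g by (simp add: image_set_diff[OF inj_f])
qed

lemma universal_lowers_S': "universal_lowers S' le' = f ` universal_lowers S le"
proof -
  have "{a\<in>S. lower S le a \<and> universal S' le' (f a)} = {a\<in>S. lower S le a \<and> universal S le a}"
    using universal_f by blast
  then show ?thesis unfolding universal_lowers_def Collect_S' using lower_g by simp
qed

lemma tame_poset_S': "tame_poset S' le'"
proof (rule tame_poset_S'I)
  let ?U = "universal_lowers S le"
  have "card (universal_lowers S' le') = card ?U"
    unfolding universal_lowers_S' by (simp add: card_image inj_on_subset[OF inj_f])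
  then have "{card S' - card (universal_lowers S' le')..<card S'} = Suc ` {card S - card ?U..<card S}"
    unfolding card_S' using card_universal_lowers_le by (simp add: Suc_diff_le)
  moreover have "bij_betw (\<lambda>a. card (Pset S' le' a)) (f ` ?U) (Suc ` {card S - card ?U..<card S})"
  proof (rule bij_betw_image_transfer)
    show "inj_on f ?U" using inj_f by (rule inj_on_subset) simp
    show "bij_betw (\<lambda>a. card (Pset S le a)) ?U {card S - card ?U..<card S}"
      by (rule universal_lowers_spectrum)
    show "bij_betw Suc {card S - card ?U..<card S} (Suc ` {card S - card ?U..<card S})"
      by (simp add: inj_on_imp_bij_betw)
    show "card (Pset S' le' (f a)) = Suc (card (Pset S le a))" if "a \<in> ?U" for a
      using that card_Pset_f[of a] unfolding universal_lowers_def by simp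
  qed
  ultimately show "bij_betw (\<lambda>a. card (Pset S' le' a)) (universal_lowers S' le')
      {card S' - card (universal_lowers S' le')..<card S'}"
    unfolding universal_lowers_S' by simp
qed

lemma Lpoly_S'_split_universal_lowers:
  "Lpoly S' le' x y = y ^ (card S - card (universal_lowers S le))
     + (\<Sum>A\<in>{A\<in>max_antichains S le. A \<inter> universal_lowers S le = {}}. x ^ bnum S le A * y ^ snum S le A)
     + y * (\<Sum>a\<in>universal_lowers S le. y ^ card (Pset S le a))"
proof -
  let ?U = "universal_lowers S le"
  have unchanged: "(\<Sum>a\<in>A. card (Pset S' le' (f a))) = snum S le A"
    if "A \<in> max_antichains S le" "A \<inter> ?U = {}" for A
  proof -
    have "card (Pset S' le' (f a)) = card (Pset S le a)" if "a \<in> A" for a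
    proof -
      have "a \<in> S" "a \<notin> ?U"
        using that \<open>A \<inter> ?U = {}\<close> max_antichains_subset[OF \<open>A \<in> max_antichains S le\<close>] by auto
      then show ?thesis using card_Pset_f by simp
    qed
    then show ?thesis unfolding snum_def by (rule sum.cong[OF refl])
  qed
  have grown: "(\<Sum>a\<in>{b}. card (Pset S' le' (f a))) = Suc (card (Pset S le b))" if "b \<in> ?U" for b
    using that card_Pset_f[OF subsetD[OF universal_lowers_subset]] by simp
  have "card (Pset S' le' g) = card S - card ?U"
    unfolding Pset_g using card_Diff_subset[OF finite_universal_lowers universal_lowers_subset]
    by (simp add: card_image inj_on_subset[OF inj_f])
  then show ?thesis
    unfolding Lpoly_S'_split_proper sum_max_antichains_split[OF finite_carrier]
    using unchanged grown by (simp add: bnum_universal_lower sum_distrib_left)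
qed

lemma Lpoly_S': "Lpoly S' le' x y = Lpoly S le x y + y ^ card S"
proof -
  let ?n = "card S" and ?u = "card (universal_lowers S le)"
  have "(y - 1) * (\<Sum>a\<in>universal_lowers S le. y ^ card (Pset S le a)) = y ^ ?n - y ^ (?n - ?u)"
    unfolding sum_universal_lowers using card_universal_lowers_le by (simp add: sum_powers_telescope)
  then show ?thesis
    unfolding Lpoly_S'_split_universal_lowers Lpoly_split_universal_lowers[OF finite_carrier]
    by (simp add: algebra_simps)
qed

end

locale bottom_extension = point_extension + tame_poset S le +
  assumes not_chain: "\<not> Complete_Partial_Order.chain le S"
    and g_below: "\<not> le' (f a) g"
begin

lemma le'_g_f [simp]: "le' g (f a) \<longleftrightarrow> a \<in> S"
  using pcomp_g[of "f a"] g_below unfolding pcomp_def by auto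

lemma plt_simps [simp]:
  "plt le' g (f a) \<longleftrightarrow> a \<in> S" "\<not> plt le' (f a) g" "\<not> plt le' g g"
  using g_below unfolding plt_def by auto

lemma g_not_basic: "\<not> basic S' le' g"
proof -
  obtain u v where "u \<in> S" "v \<in> S" "\<not> pcomp le u v"
    using not_chain unfolding chain_def pcomp_def by blast
  then show ?thesis by (intro not_basic_above[where u="f u" and v="f v"]) simp_all
qed

(* g can make f a non-basic only as the element u of (B.3), which happens iff a is least. *)
lemma basic_f_iff:
  "basic S' le' (f a) \<longleftrightarrow> basic S le a \<and> \<not> (\<forall>w\<in>S. w \<noteq> a \<longrightarrow> \<not> le w a \<and> le a w)"
  by (cases "a \<in> S") (simp_all add: basic_def ball_S' bex_S' g_below conj_ac)

lemma least_not_basic: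
  assumes least: "\<forall>w\<in>S. w \<noteq> a \<longrightarrow> \<not> le w a \<and> le a w"
  shows "\<not> basic S le a"
proof
  assume "basic S le a"
  obtain u v where u: "u \<in> S" and v: "v \<in> S" and uv: "\<not> pcomp le u v"
    using not_chain unfolding chain_def pcomp_def by blast
  have "u \<noteq> a" "v \<noteq> a" using least u v uv reflexive unfolding pcomp_def by auto
  then have "plt le a u" "plt le a v" using least u v unfolding plt_def by auto
  then show False using not_basic_above[OF u v uv] \<open>basic S le a\<close> by blast
qed

lemma basic_f: "basic S' le' (f a) \<longleftrightarrow> basic S le a"
  using basic_f_iff least_not_basic by blast

sublocale proper_point_extension
  by unfold_locales (fact not_chain g_not_basic basic_f)+

lemma lower_g: "lower S' le' g"
proof -
  obtain b where "b \<in> basics S le" using basics_nonempty[OF S_nonempty] by blast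
  then show ?thesis using g_not_basic unfolding lower_def basics_def by (auto simp: bex_S')
qed

lemma upper_g: "\<not> upper S' le' g"
  unfolding upper_def by (simp add: bex_S')

lemma Pset_up_f: "a \<in> S \<Longrightarrow> Pset_up S' le' (f a) = f ` Pset_up S le a"
  unfolding Pset_up_def Collect_S' by (simp add: bex_S')

lemma Pset_down_f:
  "a \<in> S \<Longrightarrow> Pset_down S' le' (f a) = f ` Pset_down S le a \<union> (if universal S le a then {g} else {})"
  unfolding Pset_down_def Collect_S' universal_def by (auto simp: bex_S' pcomp_commute)

lemma same_assoc_lowers_f:
  "same_assoc_lowers S' le' (f a)
     = f ` same_assoc_lowers S le a \<union> (if basics S le = assoc_basic S le a then {g} else {})"
  unfolding same_assoc_lowers_def Collect_S' assoc_basic_universal[OF universal_g] basics_S'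
  using lower_g by (auto simp: assoc_basic_f inj_image_eq_iff[OF inj_f])

lemma Pset_f: "a \<in> S \<Longrightarrow> Pset S' le' (f a) = f ` Pset S le a"
  using assoc_basic_universal[of S le a] unfolding Pset_eq
  by (auto simp: Pset_up_f Pset_down_f same_assoc_lowers_f image_set_diff[OF inj_f])

lemma Pset_g: "Pset S' le' g = f ` S"
proof -
  have "Pset_up S' le' g = f ` S"
    unfolding Pset_up_def Collect_S' by (simp add: bex_S')
  then show ?thesis unfolding Pset_eq using g_not_basic lower_g by simp
qed

lemma card_Pset_f: "a \<in> S \<Longrightarrow> card (Pset S' le' (f a)) = card (Pset S le a)"
  unfolding Pset_f by (simp add: card_image inj_on_subset[OF inj_f])

lemma universal_lowers_S': "universal_lowers S' le' = insert g (f ` universal_lowers S le)"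
proof -
  have "{a\<in>S. lower S le a \<and> universal S' le' (f a)} = {a\<in>S. lower S le a \<and> universal S le a}"
    using universal_f by blast
  then show ?thesis
    unfolding universal_lowers_def Collect_S' using lower_g universal_g by simp
qed

lemma tame_poset_S': "tame_poset S' le'"
proof (rule tame_poset_S'I)
  let ?U = "universal_lowers S le" and ?n = "card S"
  have "card (universal_lowers S' le') = Suc (card ?U)"
    unfolding universal_lowers_S' using finite_universal_lowers
    by (simp add: card_image inj_on_subset[OF inj_f] image_iff)
  then have interval: "{card S' - card (universal_lowers S' le')..<card S'} = {?n - card ?U..<?n} \<union> {?n}"
    unfolding card_S' using card_universal_lowers_le by auto
  have "bij_betw (\<lambda>a. card (Pset S' le' a)) (f ` ?U) {?n - card ?U..<?n}"
  proof (rule bij_betw_image_transfer)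
    show "inj_on f ?U" using inj_f by (rule inj_on_subset) simp
    show "bij_betw (\<lambda>a. card (Pset S le a)) ?U {?n - card ?U..<?n}"
      by (rule universal_lowers_spectrum)
    show "bij_betw id {?n - card ?U..<?n} {?n - card ?U..<?n}" by simp
    show "card (Pset S' le' (f a)) = id (card (Pset S le a))" if "a \<in> ?U" for a
      using that by (simp add: card_Pset_f subsetD[OF universal_lowers_subset])
  qed
  moreover have "card (Pset S' le' g) = ?n"
    unfolding Pset_g by (simp add: card_image inj_on_subset[OF inj_f])
  moreover have "g \<notin> f ` ?U" "?n \<notin> {?n - card ?U..<?n}" by auto
  ultimately have "bij_betw (\<lambda>a. card (Pset S' le' a)) (f ` ?U \<union> {g}) ({?n - card ?U..<?n} \<union> {?n})"
    using notIn_Un_bij_betw3[of g "f ` ?U" "\<lambda>a. card (Pset S' le' a)" "{?n - card ?U..<?n}"]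
    by simp
  then show "bij_betw (\<lambda>a. card (Pset S' le' a)) (universal_lowers S' le')
      {card S' - card (universal_lowers S' le')..<card S'}"
    by (subst interval) (simp add: universal_lowers_S')
qed

lemma Lpoly_S': "Lpoly S' le' x y = Lpoly S le x y + y ^ card S"
proof -
  have "(\<Sum>a\<in>A. card (Pset S' le' (f a))) = snum S le A" if "A \<in> max_antichains S le" for A
  proof -
    have "A \<subseteq> S" using that by (rule max_antichains_subset)
    then show ?thesis unfolding snum_def by (intro sum.cong) (auto simp: card_Pset_f)
  qed
  then show ?thesis
    unfolding Lpoly_S'_split_proper Pset_g
    by (simp add: Lpoly_eq_sum_max_antichains card_image inj_on_subset[OF inj_f] add.commute)
qed

end

section \<open>Disjoint unions\<close>

locale disjoint_union = S: finite_poset S le + T: finite_poset T leT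
  for S :: "'b set" and le :: "'b \<Rightarrow> 'b \<Rightarrow> bool" and T :: "'e set" and leT :: "'e \<Rightarrow> 'e \<Rightarrow> bool" +
  fixes S' :: "'c set" and le' :: "'c \<Rightarrow> 'c \<Rightarrow> bool" and f :: "'b \<Rightarrow> 'c" and h :: "'e \<Rightarrow> 'c"
  assumes inj_f: "inj f" and inj_h: "inj h"
    and f_ne_h: "f a \<noteq> h b"
    and S'_eq: "S' = f ` S \<union> h ` T"
    and le'_f_f [simp]: "le' (f a) (f a') \<longleftrightarrow> le a a'"
    and le'_h_h [simp]: "le' (h b) (h b') \<longleftrightarrow> leT b b'"
    and le'_f_h [simp]: "\<not> le' (f a) (h b)"
    and le'_h_f [simp]: "\<not> le' (h b) (f a)"
begin

lemma f_ne_h' [simp]: "f a \<noteq> h b" "h b \<noteq> f a"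
  using f_ne_h by metis+

lemma swap: "disjoint_union T leT S le S' le' h f"
  using inj_f inj_h S'_eq
  by (intro disjoint_union.intro disjoint_union_axioms.intro T.finite_poset_axioms S.finite_poset_axioms)
    (simp_all add: Un_commute)

lemma f_in_S' [simp]: "f a \<in> S' \<longleftrightarrow> a \<in> S"
  unfolding S'_eq by (auto simp: inj_image_mem_iff[OF inj_f])

lemma f_eq_iff [simp]: "f a = f a' \<longleftrightarrow> a = a'"
  using inj_f by (rule inj_eq)

lemma h_eq_iff [simp]: "h b = h b' \<longleftrightarrow> b = b'"
  using inj_h by (rule inj_eq)

lemma ball_S': "(\<forall>z\<in>S'. P z) \<longleftrightarrow> (\<forall>a\<in>S. P (f a)) \<and> (\<forall>b\<in>T. P (h b))"
  and bex_S': "(\<exists>z\<in>S'. P z) \<longleftrightarrow> (\<exists>a\<in>S. P (f a)) \<or> (\<exists>b\<in>T. P (h b))"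
  and Collect_S': "{z\<in>S'. P z} = f ` {a\<in>S. P (f a)} \<union> h ` {b\<in>T. P (h b)}"
  unfolding S'_eq by auto

lemma pcomp_f_f [simp]: "pcomp le' (f a) (f a') \<longleftrightarrow> pcomp le a a'"
  and pcomp_f_h [simp]: "\<not> pcomp le' (f a) (h b)" "\<not> pcomp le' (h b) (f a)"
  and plt_f_f [simp]: "plt le' (f a) (f a') \<longleftrightarrow> plt le a a'"
  and plt_f_h [simp]: "\<not> plt le' (f a) (h b)" "\<not> plt le' (h b) (f a)"
  unfolding pcomp_def plt_def by simp_all

lemma S'_cases [consumes 1, case_names f h]:
  "z \<in> S' \<Longrightarrow> (\<And>a. a \<in> S \<Longrightarrow> z = f a \<Longrightarrow> P) \<Longrightarrow> (\<And>b. b \<in> T \<Longrightarrow> z = h b \<Longrightarrow> P) \<Longrightarrow> P"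
  unfolding S'_eq by blast

lemma finite_poset_S': "finite_poset S' le'"
proof
  show "finite S'" unfolding S'_eq using S.finite_carrier T.finite_carrier by simp
  show "le' z z" if "z \<in> S'" for z
    using that S.reflexive T.reflexive by (elim S'_cases) simp_all
  show "z = w" if "z \<in> S'" "w \<in> S'" "le' z w" "le' w z" for z w
    using that by (elim S'_cases) (auto intro: S.antisymmetric T.antisymmetric)
  show "le' z u" if "z \<in> S'" "w \<in> S'" "u \<in> S'" "le' z w" "le' w u" for z w u
    using that by (elim S'_cases) (simp_all, (meson S.transitive T.transitive)+)
qed

lemma card_S': "card S' = card S + card T"
proof -
  have "card (f ` S) = card S" "card (h ` T) = card T"
    by (simp_all add: card_image inj_on_subset[OF inj_f] inj_on_subset[OF inj_h])
  moreover have "f ` S \<inter> h ` T = {}" by auto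
  ultimately show ?thesis
    unfolding S'_eq using S.finite_carrier T.finite_carrier by (simp add: card_Un_disjoint)
qed

lemma basic_f [simp]: "basic S' le' (f a) \<longleftrightarrow> basic S le a"
  by (cases "a \<in> S") (simp_all add: basic_def ball_S' bex_S')

lemma lower_f [simp]: "lower S' le' (f a) \<longleftrightarrow> lower S le a"
  and upper_f [simp]: "upper S' le' (f a) \<longleftrightarrow> upper S le a"
  unfolding lower_def upper_def by (simp_all add: bex_S')

lemma assoc_basic_f: "assoc_basic S' le' (f a) = f ` assoc_basic S le a"
  unfolding assoc_basic_def Collect_S' by simp

lemma universal_f: "a \<in> S \<Longrightarrow> universal S' le' (f a) \<longleftrightarrow> universal S le a \<and> T = {}"
  unfolding universal_def by (auto simp: ball_S')

lemma Pset_f: "Pset S' le' (f a) = f ` Pset S le a"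
proof (rule Pset_image)
  show "Pset_up S' le' (f a) = f ` Pset_up S le a"
    unfolding Pset_up_def Collect_S' by (simp add: bex_S')
  have "Pset_down S' le' (f a) = f ` Pset_down S le a"
    unfolding Pset_down_def Collect_S' by (simp add: bex_S')
  moreover have "same_assoc_lowers S' le' (f a) = f ` same_assoc_lowers S le a \<union> h ` {b\<in>T. lower S' le' (h b)
      \<and> assoc_basic S' le' (h b) = f ` assoc_basic S le a}"
    unfolding same_assoc_lowers_def Collect_S' by (simp add: assoc_basic_f inj_image_eq_iff[OF inj_f])
  ultimately show "Pset_down S' le' (f a) - same_assoc_lowers S' le' (f a)
      = f ` (Pset_down S le a - same_assoc_lowers S le a)"
    by (auto simp: image_set_diff[OF inj_f])
qed simp_all

lemma card_Pset_f: "card (Pset S' le' (f a)) = card (Pset S le a)"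
  unfolding Pset_f by (simp add: card_image inj_on_subset[OF inj_f])

lemmas h_simps [simp] =
  disjoint_union.f_in_S'[OF swap] disjoint_union.pcomp_f_f[OF swap]
  disjoint_union.plt_f_f[OF swap]
  disjoint_union.basic_f[OF swap] disjoint_union.lower_f[OF swap]
  disjoint_union.upper_f[OF swap]

lemmas universal_h = disjoint_union.universal_f[OF swap]
  and card_Pset_h = disjoint_union.card_Pset_f[OF swap]

lemma max_antichain_union_image:
  assumes "A \<subseteq> S" "B \<subseteq> T"
  shows "max_antichain S' le' (f ` A \<union> h ` B) \<longleftrightarrow> max_antichain S le A \<and> max_antichain T leT B"
proof -
  have sub: "f ` A \<union> h ` B \<subseteq> S'" using assms unfolding S'_eq by blast
  have anti: "(\<forall>u\<in>f ` A \<union> h ` B. \<forall>v\<in>f ` A \<union> h ` B. u \<noteq> v \<longrightarrow> \<not> pcomp le' u v)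
      \<longleftrightarrow> (\<forall>u\<in>A. \<forall>v\<in>A. u \<noteq> v \<longrightarrow> \<not> pcomp le u v) \<and> (\<forall>u\<in>B. \<forall>v\<in>B. u \<noteq> v \<longrightarrow> \<not> pcomp leT u v)"
    by (simp add: ball_Un)
  have mem: "f z \<in> f ` A \<union> h ` B \<longleftrightarrow> z \<in> A" "h w \<in> f ` A \<union> h ` B \<longleftrightarrow> w \<in> B" for z w
    by (auto simp: inj_image_mem_iff[OF inj_f] inj_image_mem_iff[OF inj_h])
  have "(\<forall>z\<in>S' - (f ` A \<union> h ` B). \<exists>c\<in>f ` A \<union> h ` B. pcomp le' z c)
      \<longleftrightarrow> (\<forall>z\<in>S'. z \<notin> f ` A \<union> h ` B \<longrightarrow> (\<exists>c\<in>f ` A \<union> h ` B. pcomp le' z c))"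
    by blast
  also have "\<dots> \<longleftrightarrow> (\<forall>z\<in>S - A. \<exists>c\<in>A. pcomp le z c) \<and> (\<forall>z\<in>T - B. \<exists>c\<in>B. pcomp leT z c)"
    unfolding ball_S' mem by (auto simp: bex_Un)
  finally have max: "(\<forall>z\<in>S' - (f ` A \<union> h ` B). \<exists>c\<in>f ` A \<union> h ` B. pcomp le' z c)
      \<longleftrightarrow> (\<forall>z\<in>S - A. \<exists>c\<in>A. pcomp le z c) \<and> (\<forall>z\<in>T - B. \<exists>c\<in>B. pcomp leT z c)" .
  show ?thesis
    unfolding max_antichain_def by (simp only: anti max sub assms simp_thms conj_ac)
qed

lemma max_antichains_S':
  "max_antichains S' le' = (\<lambda>(A, B). f ` A \<union> h ` B) ` (max_antichains S le \<times> max_antichains T leT)"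
proof (rule equalityI; rule subsetI)
  fix C assume C: "C \<in> max_antichains S' le'"
  define A where "A = {a\<in>S. f a \<in> C}"
  define B where "B = {b\<in>T. h b \<in> C}"
  have "C \<subseteq> S'" using C max_antichains_subset_Pow by blast
  then have C_eq: "C = f ` A \<union> h ` B" unfolding A_def B_def S'_eq by blast
  have "A \<subseteq> S" "B \<subseteq> T" unfolding A_def B_def by blast+
  then have "A \<in> max_antichains S le" "B \<in> max_antichains T leT"
    using C max_antichain_union_image unfolding C_eq max_antichains_def by blast+
  then show "C \<in> (\<lambda>(A, B). f ` A \<union> h ` B) ` (max_antichains S le \<times> max_antichains T leT)"
    unfolding C_eq by blast
next
  fix C assume "C \<in> (\<lambda>(A, B). f ` A \<union> h ` B) ` (max_antichains S le \<times> max_antichains T leT)"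
  then obtain A B where AB: "A \<in> max_antichains S le" "B \<in> max_antichains T leT"
    and C_eq: "C = f ` A \<union> h ` B" by blast
  then have "A \<subseteq> S" "B \<subseteq> T" using max_antichains_subset_Pow by blast+
  then show "C \<in> max_antichains S' le'"
    using AB max_antichain_union_image unfolding C_eq max_antichains_def by blast
qed

lemma inj_on_union_image: "inj_on (\<lambda>(A, B). f ` A \<union> h ` B) X"
proof (rule inj_onI, clarify)
  fix A B A' B' assume eq: "f ` A \<union> h ` B = f ` A' \<union> h ` B'"
  have "z \<in> A \<longleftrightarrow> z \<in> A'" for z
    using arg_cong[OF eq, of "\<lambda>C. f z \<in> C"] by (auto simp: inj_image_mem_iff[OF inj_f])
  moreover have "w \<in> B \<longleftrightarrow> w \<in> B'" for w
    using arg_cong[OF eq, of "\<lambda>C. h w \<in> C"] by (auto simp: inj_image_mem_iff[OF inj_h])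
  ultimately show "A = A' \<and> B = B'" by blast
qed

lemma bnum_union:
  assumes "A \<subseteq> S" "B \<subseteq> T"
  shows "bnum S' le' (f ` A \<union> h ` B) = bnum S le A + bnum T leT B"
proof -
  have "finite A" "finite B"
    using assms S.finite_carrier T.finite_carrier by (auto intro: finite_subset)
  have "{z\<in>f ` A \<union> h ` B. basic S' le' z} = f ` {a\<in>A. basic S le a} \<union> h ` {b\<in>B. basic T leT b}"
    by auto
  moreover have "f ` {a\<in>A. basic S le a} \<inter> h ` {b\<in>B. basic T leT b} = {}" by auto
  ultimately show ?thesis
    unfolding bnum_def using \<open>finite A\<close> \<open>finite B\<close>
    by (simp add: card_Un_disjoint card_image inj_on_subset[OF inj_f] inj_on_subset[OF inj_h])
qed

lemma snum_union:
  assumes "A \<subseteq> S" "B \<subseteq> T"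
  shows "snum S' le' (f ` A \<union> h ` B) = snum S le A + snum T leT B"
proof -
  have "finite A" "finite B"
    using assms S.finite_carrier T.finite_carrier by (auto intro: finite_subset)
  moreover have "f ` A \<inter> h ` B = {}" by auto
  ultimately have "snum S' le' (f ` A \<union> h ` B) = snum S' le' (f ` A) + snum S' le' (h ` B)"
    unfolding snum_def by (simp add: sum.union_disjoint)
  also have "\<dots> = snum S le A + snum T leT B"
    unfolding snum_image[OF inj_on_subset[OF inj_f subset_UNIV]]
      snum_image[OF inj_on_subset[OF inj_h subset_UNIV]]
    by (simp add: snum_def card_Pset_f card_Pset_h)
  finally show ?thesis .
qed

lemma Lpoly_S': "Lpoly S' le' x y = Lpoly S le x y * Lpoly T leT x y"
proof -
  have "Lpoly S' le' x y = (\<Sum>(A, B)\<in>max_antichains S le \<times> max_antichains T leT.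
      x ^ bnum S' le' (f ` A \<union> h ` B) * y ^ snum S' le' (f ` A \<union> h ` B))"
    unfolding Lpoly_eq_sum_max_antichains max_antichains_S'
    by (subst sum.reindex[OF inj_on_union_image]) (simp add: case_prod_unfold)
  also have "\<dots> = (\<Sum>(A, B)\<in>max_antichains S le \<times> max_antichains T leT.
      (x ^ bnum S le A * y ^ snum S le A) * (x ^ bnum T leT B * y ^ snum T leT B))"
    by (intro sum.cong refl)
      (auto simp: bnum_union snum_union max_antichains_subset power_add algebra_simps)
  also have "\<dots> = Lpoly S le x y * Lpoly T leT x y"
    unfolding Lpoly_eq_sum_max_antichains sum_product sum.cartesian_product by simp
  finally show ?thesis .
qed


lemma basics_S': "basics S' le' = f ` basics S le \<union> h ` basics T leT"
  unfolding basics_def Collect_S' by simp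

lemma universal_lowers_S':
  "universal_lowers S' le'
     = (if T = {} then f ` universal_lowers S le else {}) \<union> (if S = {} then h ` universal_lowers T leT else {})"
proof -
  have "{a\<in>S. lower S le a \<and> universal S' le' (f a)} = {a\<in>S. lower S le a \<and> universal S le a \<and> T = {}}"
    using universal_f by blast
  moreover have "{b\<in>T. lower T leT b \<and> universal S' le' (h b)} = {b\<in>T. lower T leT b \<and> universal T leT b \<and> S = {}}"
    using universal_h by blast
  ultimately show ?thesis unfolding universal_lowers_def Collect_S' by auto
qed

lemma lower_assoc_all_basics_universal_f:
  assumes "tame_poset S le" "tame_poset T leT" "a \<in> S"
    and "lower S' le' (f a)" "assoc_basic S' le' (f a) = basics S' le'"
  shows "universal S' le' (f a)"
proof -
  have eq: "f ` assoc_basic S le a = f ` basics S le \<union> h ` basics T leT"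
    using assms(5) unfolding assoc_basic_f basics_S' .
  have "basics T leT = {}"
  proof (rule equals0I)
    fix b assume "b \<in> basics T leT"
    then have "h b \<in> f ` assoc_basic S le a" using eq by blast
    then show False by (metis f_ne_h'(2) imageE)
  qed
  then have "T = {}" using tame_poset.basics_nonempty[OF assms(2)] by blast
  moreover have "assoc_basic S le a = basics S le"
    using eq \<open>basics T leT = {}\<close> inj_image_eq_iff[OF inj_f] by simp
  ultimately show ?thesis
    using tame_poset.lower_assoc_all_basics_universal[OF assms(1,3)] assms(3,4) universal_f by simp
qed

lemma universal_lowers_spectrum_S'_left:
  assumes "tame_poset S le" "T = {}"
  shows "bij_betw (\<lambda>z. card (Pset S' le' z)) (universal_lowers S' le')
    {card S' - card (universal_lowers S' le')..<card S'}"
proof -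
  let ?U = "universal_lowers S le"
  have U': "universal_lowers S' le' = f ` ?U"
    unfolding universal_lowers_S' using assms(2) by (simp add: universal_lowers_def)
  have "card S' = card S" "card (universal_lowers S' le') = card ?U"
    unfolding card_S' U' using assms(2) by (simp_all add: card_image inj_on_subset[OF inj_f])
  moreover have "bij_betw (\<lambda>z. card (Pset S' le' z)) (f ` ?U) {card S - card ?U..<card S}"
  proof (rule bij_betw_image_transfer)
    show "inj_on f ?U" using inj_f by (rule inj_on_subset) simp
    show "bij_betw (\<lambda>a. card (Pset S le a)) ?U {card S - card ?U..<card S}"
      by (rule tame_poset.universal_lowers_spectrum[OF assms(1)])
  qed (simp_all add: card_Pset_f bij_betw_def)
  ultimately show ?thesis unfolding U' by simp
qed

lemma tame_poset_S':
  assumes "tame_poset S le" "tame_poset T leT"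
  shows "tame_poset S' le'"
proof (rule tame_poset.intro[OF finite_poset_S'], unfold_locales)
  assume "S' \<noteq> {}"
  then have "S \<noteq> {} \<or> T \<noteq> {}" unfolding S'_eq by blast
  then show "basics S' le' \<noteq> {}"
    using tame_poset.basics_nonempty[OF assms(1)] tame_poset.basics_nonempty[OF assms(2)]
    unfolding basics_S' by blast
next
  fix l assume "l \<in> S'" "lower S' le' l" "assoc_basic S' le' l = basics S' le'"
  then show "universal S' le' l"
    using lower_assoc_all_basics_universal_f[OF assms]
      disjoint_union.lower_assoc_all_basics_universal_f[OF swap assms(2,1)]
    by (elim S'_cases) (simp_all add: Un_commute)
next
  show "bij_betw (\<lambda>z. card (Pset S' le' z)) (universal_lowers S' le')
    {card S' - card (universal_lowers S' le')..<card S'}"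
  proof (cases "S = {} \<or> T = {}")
    case True
    then show ?thesis
      using universal_lowers_spectrum_S'_left[OF assms(1)]
        disjoint_union.universal_lowers_spectrum_S'_left[OF swap assms(2)] by blast
  next
    case False
    then have "universal_lowers S' le' = {}" unfolding universal_lowers_S' by simp
    then show ?thesis by (simp add: bij_betw_def)
  qed
qed

end

section \<open>V-posets\<close>

lemma tame_poset_empty: "tame_poset {} le"
  by unfold_locales (simp_all add: universal_lowers_def bij_betw_def)

lemma Lpoly_empty: "Lpoly {} le x y = 1"
  unfolding Lpoly_eq_sum_max_antichains max_antichains_empty by (simp add: bnum_def snum_def)

lemma Lpoly_singleton: "le a a \<Longrightarrow> Lpoly {a} le x y = x"
proof -
  assume "le a a"
  then interpret finite_chain "{a}" le by unfold_locales (auto simp: chain_def)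
  show ?thesis using Lpoly_chain by simp
qed

lemma point_extension_VTop:
  "finite_poset (velems t) (vle t)
    \<Longrightarrow> point_extension (velems t) (vle t) (velems (VTop t)) (vle (VTop t)) (Cons 0) [1]"
  by (intro point_extension.intro point_extension_axioms.intro) (auto simp: pcomp_def)

lemma point_extension_VBot:
  "finite_poset (velems t) (vle t)
    \<Longrightarrow> point_extension (velems t) (vle t) (velems (VBot t)) (vle (VBot t)) (Cons 0) [1]"
  by (intro point_extension.intro point_extension_axioms.intro) (auto simp: pcomp_def)

lemma top_extension_VTop:
  "tame_poset (velems t) (vle t) \<Longrightarrow> \<not> Complete_Partial_Order.chain (vle t) (velems t)
    \<Longrightarrow> top_extension (velems t) (vle t) (velems (VTop t)) (vle (VTop t)) (Cons 0) [1]"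
  by (intro top_extension.intro top_extension_axioms.intro point_extension_VTop)
    (simp_all add: tame_poset.axioms(1))

lemma bottom_extension_VBot:
  "tame_poset (velems t) (vle t) \<Longrightarrow> \<not> Complete_Partial_Order.chain (vle t) (velems t)
    \<Longrightarrow> bottom_extension (velems t) (vle t) (velems (VBot t)) (vle (VBot t)) (Cons 0) [1]"
  by (intro bottom_extension.intro bottom_extension_axioms.intro point_extension_VBot)
    (simp_all add: tame_poset.axioms(1))

lemma disjoint_union_VUnion:
  "finite_poset (velems s) (vle s) \<Longrightarrow> finite_poset (velems t) (vle t)
    \<Longrightarrow> disjoint_union (velems s) (vle s) (velems t) (vle t) (velems (VUnion s t)) (vle (VUnion s t)) (Cons 0) (Cons 1)"
  by (intro disjoint_union.intro disjoint_union_axioms.intro) auto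

lemma tame_poset_velems: "tame_poset (velems t) (vle t)"
proof (induction t)
  case VEmpty
  show ?case using tame_poset_empty by simp
next
  case (VUnion s t)
  then show ?case
    using disjoint_union.tame_poset_S'[OF disjoint_union_VUnion] tame_poset.axioms(1) by blast
next
  case (VTop t)
  then show ?case
    using point_extension.tame_poset_S'_chain[OF point_extension_VTop]
      top_extension.tame_poset_S'[OF top_extension_VTop] tame_poset.axioms(1) by blast
next
  case (VBot t)
  then show ?case
    using point_extension.tame_poset_S'_chain[OF point_extension_VBot]
      bottom_extension.tame_poset_S'[OF bottom_extension_VBot] tame_poset.axioms(1) by blast
qed

lemma finite_poset_velems: "finite_poset (velems t) (vle t)"
  using tame_poset_velems by (rule tame_poset.axioms(1))

lemma Lpoly_VUnion:
  "Lpoly (velems (VUnion s t)) (vle (VUnion s t)) x y = Lpoly (velems s) (vle s) x y * Lpoly (velems t) (vle t) x y"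
  using disjoint_union_VUnion[OF finite_poset_velems finite_poset_velems] by (rule disjoint_union.Lpoly_S')

lemma Lpoly_VTop:
  "Lpoly (velems (VTop t)) (vle (VTop t)) x y
     = (if velems t = {} then x else Lpoly (velems t) (vle t) x y + y ^ card (velems t))"
proof (cases "velems t = {}")
  case True
  then show ?thesis using Lpoly_singleton[of "vle (VTop t)" "[1]"] by simp
next
  case False
  interpret point_extension "velems t" "vle t" "velems (VTop t)" "vle (VTop t)" "Cons 0" "[1]"
    using finite_poset_velems by (rule point_extension_VTop)
  show ?thesis
  proof (cases "Complete_Partial_Order.chain (vle t) (velems t)")
    case True
    then show ?thesis using Lpoly_S'_chain False by simp
  next
    case not_chain: False
    show ?thesis using top_extension.Lpoly_S'[OF top_extension_VTop[OF tame_poset_velems not_chain]]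
      False by simp
  qed
qed

lemma Lpoly_VBot:
  "Lpoly (velems (VBot t)) (vle (VBot t)) x y
     = (if velems t = {} then x else Lpoly (velems t) (vle t) x y + y ^ card (velems t))"
proof (cases "velems t = {}")
  case True
  then show ?thesis using Lpoly_singleton[of "vle (VBot t)" "[1]"] by simp
next
  case False
  interpret point_extension "velems t" "vle t" "velems (VBot t)" "vle (VBot t)" "Cons 0" "[1]"
    using finite_poset_velems by (rule point_extension_VBot)
  show ?thesis
  proof (cases "Complete_Partial_Order.chain (vle t) (velems t)")
    case True
    then show ?thesis using Lpoly_S'_chain False by simp
  next
    case not_chain: False
    show ?thesis
      using bottom_extension.Lpoly_S'[OF bottom_extension_VBot[OF tame_poset_velems not_chain]]
        False by simp
  qed
qed

theorem theorem3p17: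
  fixes t :: vterm and x y :: "'a::comm_ring_1"
  shows "vpoly t x y = Lpoly (velems t) (vle t) x y"
proof (induction t)
  case VEmpty
  show ?case by (simp add: Lpoly_empty)
next
  case (VUnion s t)
  then show ?case by (simp only: vpoly.simps Lpoly_VUnion)
next
  case (VTop t)
  then show ?case by (simp only: vpoly.simps Lpoly_VTop)
next
  case (VBot t)
  then show ?case by (simp only: vpoly.simps Lpoly_VBot)
qed

end
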